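(* Let $\mathcal{G}$ be a tomographically local GPT and let $\widetilde{\xi}:\mathcal{G}\to\mathbf{SubStoch}$ be an ontological model of $\mathcal{G}$, with $\widetilde\xi(A)=\mathbb{R}^{\Lambda_A}$. Then for each system $A$ there is an invertible linear map $\chi_A:A\to\mathbb{R}^{\Lambda_A}$ such that: (i) for every process $T:A\to B$ of $\mathcal{G}$, $\widetilde{\xi}(T)=\chi_B\circ T\circ\chi_A^{-1}$; (ii) $\mathbf{1}_{\Lambda_A}\circ\chi_A=u_A$, where $\mathbf{1}_{\Lambda_A}$ is the all-ones covector on $\mathbb{R}^{\Lambda_A}$; (iii) for every pair of systems $A,B$, the linear map $X\mapsto\chi_B\circ X\circ\chi_A^{-1}$ (from linear maps $A\to B$ to linear maps $\mathbb{R}^{\Lambda_A}\to\mathbb{R}^{\Lambda_B}$) is positive: it maps the cone of nonnegative linear combinations of processes $A\to B$ of $\mathcal{G}$ into the cone of nonnegative linear combinations of substochastic maps $\mathbb{R}^{\Lambda_A}\to\mathbb{R}^{\Lambda_B}$.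
   Context: A process theory consists of systems (closed under a composition $A\otimes B$, with a trivial system $I$) and processes $T:A\to B$, closed under sequential composition $\circ$ and parallel composition $\otimes$ and containing identities; processes $I\to A$ are states, $A\to I$ effects, $I\to I$ scalars. $\mathbf{RLinear}$ is the process theory of finite-dimensional real vector spaces (composite $=$ tensor product, trivial system $\mathbb{R}$) and linear maps. $\mathbf{SubStoch}$ is the sub-process theory of $\mathbf{RLinear}$ whose systems are spaces $\mathbb{R}^\Lambda$ of real functions on finite sets $\Lambda$ (with $\mathbb{R}^{\Lambda}\otimes\mathbb{R}^{\Lambda'}=\mathbb{R}^{\Lambda\times\Lambda'}$, trivial system $\mathbb{R}$), and whose processes $\mathbb{R}^\Lambda\to\mathbb{R}^{\Lambda'}$ are the substochastic maps, i.e. linear maps $v\mapsto(\lambda'\mapsto\sum_\lambda f(\lambda'|\lambda)v(\lambda))$ with $f(\lambda'|\lambda)\in[0,1]$ and $\sum_{\lambda'}f(\lambda'|\lambda)\le1$ for all $\lambda$. The all-ones covector $\mathbf{1}_\Lambda$ is $v\mapsto\sum_\lambda v(\lambda)$. A tomographically local GPT is here a sub-process theory $\mathcal{G}$ of $\mathbf{RLinear}$ (closed under $\circ$, $\otimes$, containing identities) such that: each system $A$ is a finite-dimensional real vector space and composites are tensor products; the states of $A$ span $A$ and the effects on $A$ span $A^*$; every scalar lies in $[0,1]$; for each type the set of processes is closed under convex combinations; each system $A$ has a distinguished deterministic effect $u_A$ with $u_{A\otimes B}=u_A\otimes u_B$. An ontological model of $\mathcal{G}$ is a map $\widetilde\xi:\mathcal{G}\to\mathbf{SubStoch}$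 that is diagram-preserving (it assigns to each system $A$ a space $\mathbb{R}^{\Lambda_A}$, with $\widetilde\xi(A\otimes B)=\mathbb{R}^{\Lambda_A}\otimes\mathbb{R}^{\Lambda_B}$, $\widetilde\xi(I)=\mathbb{R}$, and to each process $T:A\to B$ a substochastic map $\widetilde\xi(T):\mathbb{R}^{\Lambda_A}\to\mathbb{R}^{\Lambda_B}$, preserving $\circ$, $\otimes$ and identities) and satisfies: (1) $\widetilde\xi(u_A)=\mathbf{1}_{\Lambda_A}$; (2) $\widetilde\xi(s)=s$ for every scalar $s$; (3) it preserves convex combinations of processes of the same type and coarse-grainings (sums) of effects whenever these relations hold in $\mathcal{G}$. *)

theory Defs
  imports "Jordan_Normal_Form.Matrix"
begin

text \<open>Linear maps R^m -> R^n are represented by real n x m matrices (JNF type real mat).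
  Composite systems are tensor products; R^a (x) R^b is identified with R^(a*b)
  via the Kronecker product below (index (i,i') |-> i * b + i').\<close>

definition kron :: "real mat \<Rightarrow> real mat \<Rightarrow> real mat" where
  "kron M N = mat (dim_row M * dim_row N) (dim_col M * dim_col N)
     (\<lambda>(i,j). M $$ (i div dim_row N, j div dim_col N) * N $$ (i mod dim_row N, j mod dim_col N))"

definition lin_comb :: "nat \<Rightarrow> nat \<Rightarrow> nat set \<Rightarrow> (nat \<Rightarrow> real) \<Rightarrow> (nat \<Rightarrow> real mat) \<Rightarrow> real mat" where
  "lin_comb r c K a M = mat r c (\<lambda>(i,j). \<Sum>k\<in>K. a k * M k $$ (i,j))"

definition convex_weights :: "nat set \<Rightarrow> (nat \<Rightarrow> real) \<Rightarrow> bool" where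
  "convex_weights K p \<longleftrightarrow> finite K \<and> (\<forall>k\<in>K. 0 \<le> p k) \<and> sum p K = 1"

definition cone_of :: "nat \<Rightarrow> nat \<Rightarrow> real mat set \<Rightarrow> real mat set" where
  "cone_of r c S = {lin_comb r c K a M | K a M. finite K \<and> (\<forall>k\<in>K. 0 \<le> a k \<and> M k \<in> S)}"

definition ones_row :: "nat \<Rightarrow> real mat" where
  "ones_row n = mat 1 n (\<lambda>_. 1)"

text \<open>Substochastic maps R^m -> R^n, i.e. R^Lambda -> R^Lambda' with |Lambda| = m, |Lambda'| = n
  (entry (i,j) is f(i|j)).\<close>
definition substoch :: "nat \<Rightarrow> nat \<Rightarrow> real mat \<Rightarrow> bool" where
  "substoch m n F \<longleftrightarrow> F \<in> carrier_mat n m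
     \<and> (\<forall>i<n. \<forall>j<m. 0 \<le> F $$ (i,j) \<and> F $$ (i,j) \<le> 1)
     \<and> (\<forall>j<m. (\<Sum>i<n. F $$ (i,j)) \<le> 1)"

text \<open>A tomographically local GPT: systems are labels of type 'sys, system A is the vector space
  R^(sdim A); tens is the composition of systems, I the trivial system; proc A B the set of
  processes A -> B (as matrices); u A the distinguished deterministic effect.\<close>
definition tl_gpt ::
  "('sys \<Rightarrow> nat) \<Rightarrow> ('sys \<Rightarrow> 'sys \<Rightarrow> 'sys) \<Rightarrow> 'sys \<Rightarrow> ('sys \<Rightarrow> 'sys \<Rightarrow> real mat set)
     \<Rightarrow> ('sys \<Rightarrow> real mat) \<Rightarrow> bool" where
  "tl_gpt sdim tens I proc u \<longleftrightarrow>
     \<comment> \<open>systems: strict monoidal structure, composites are tensor products\<close>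
     (\<forall>A B C. tens (tens A B) C = tens A (tens B C)) \<and>
     (\<forall>A. tens I A = A \<and> tens A I = A) \<and>
     sdim I = 1 \<and>
     (\<forall>A B. sdim (tens A B) = sdim A * sdim B) \<and>
     \<comment> \<open>processes are linear maps of the right type\<close>
     (\<forall>A B. proc A B \<subseteq> carrier_mat (sdim B) (sdim A)) \<and>
     \<comment> \<open>closure under sequential and parallel composition, identities\<close>
     (\<forall>A B C S T. S \<in> proc B C \<longrightarrow> T \<in> proc A B \<longrightarrow> S * T \<in> proc A C) \<and>
     (\<forall>A B A' B' T T'. T \<in> proc A B \<longrightarrow> T' \<in> proc A' B' \<longrightarrow>
         kron T T' \<in> proc (tens A A') (tens B B')) \<and>
     (\<forall>A. 1\<^sub>m (sdim A) \<in> proc A A) \<and>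
     \<comment> \<open>states span A, effects span A*\<close>
     (\<forall>A. \<forall>v \<in> carrier_mat (sdim A) 1. \<exists>K a s. finite K \<and> (\<forall>k\<in>K. s k \<in> proc I A)
          \<and> v = lin_comb (sdim A) 1 K a s) \<and>
     (\<forall>A. \<forall>w \<in> carrier_mat 1 (sdim A). \<exists>K a e. finite K \<and> (\<forall>k\<in>K. e k \<in> proc A I)
          \<and> w = lin_comb 1 (sdim A) K a e) \<and>
     \<comment> \<open>scalars lie in [0,1]\<close>
     (\<forall>s \<in> proc I I. 0 \<le> s $$ (0,0) \<and> s $$ (0,0) \<le> 1) \<and>
     \<comment> \<open>convexity\<close>
     (\<forall>A B K p T. convex_weights K p \<longrightarrow> (\<forall>k\<in>K. T k \<in> proc A B) \<longrightarrow>
         lin_comb (sdim B) (sdim A) K p T \<in> proc A B) \<and>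
     \<comment> \<open>deterministic effects\<close>
     (\<forall>A. u A \<in> proc A I) \<and>
     (\<forall>A B. u (tens A B) = kron (u A) (u B))"

text \<open>An ontological model: system A is sent to R^(Lambda_A), represented by R^(n A)
  with n A = |Lambda_A|; xi A B T is the image of the process T : A -> B.\<close>
definition ontological_model ::
  "('sys \<Rightarrow> nat) \<Rightarrow> ('sys \<Rightarrow> 'sys \<Rightarrow> 'sys) \<Rightarrow> 'sys \<Rightarrow> ('sys \<Rightarrow> 'sys \<Rightarrow> real mat set)
     \<Rightarrow> ('sys \<Rightarrow> real mat) \<Rightarrow> ('sys \<Rightarrow> nat) \<Rightarrow> ('sys \<Rightarrow> 'sys \<Rightarrow> real mat \<Rightarrow> real mat) \<Rightarrow> bool" where
  "ontological_model sdim tens I proc u n xi \<longleftrightarrow>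
     n I = 1 \<and>
     (\<forall>A B. n (tens A B) = n A * n B) \<and>
     (\<forall>A B T. T \<in> proc A B \<longrightarrow> substoch (n A) (n B) (xi A B T)) \<and>
     \<comment> \<open>diagram preservation\<close>
     (\<forall>A B C S T. S \<in> proc B C \<longrightarrow> T \<in> proc A B \<longrightarrow> xi A C (S * T) = xi B C S * xi A B T) \<and>
     (\<forall>A B A' B' T T'. T \<in> proc A B \<longrightarrow> T' \<in> proc A' B' \<longrightarrow>
         xi (tens A A') (tens B B') (kron T T') = kron (xi A B T) (xi A' B' T')) \<and>
     (\<forall>A. xi A A (1\<^sub>m (sdim A)) = 1\<^sub>m (n A)) \<and>
     \<comment> \<open>(1) deterministic effects go to the all-ones covector\<close>
     (\<forall>A. xi A I (u A) = ones_row (n A)) \<and>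
     \<comment> \<open>(2) scalars are preserved\<close>
     (\<forall>s \<in> proc I I. xi I I s = s) \<and>
     \<comment> \<open>(3) convex combinations and coarse-grainings of effects are preserved\<close>
     (\<forall>A B K p T S. convex_weights K p \<longrightarrow> (\<forall>k\<in>K. T k \<in> proc A B) \<longrightarrow> S \<in> proc A B \<longrightarrow>
         S = lin_comb (sdim B) (sdim A) K p T \<longrightarrow>
         xi A B S = lin_comb (n B) (n A) K p (\<lambda>k. xi A B (T k))) \<and>
     (\<forall>A K e E. finite K \<longrightarrow> (\<forall>k\<in>K. e k \<in> proc A I) \<longrightarrow> E \<in> proc A I \<longrightarrow>
         E = lin_comb 1 (sdim A) K (\<lambda>_. 1) e \<longrightarrow>
         xi A I E = lin_comb 1 (n A) K (\<lambda>_. 1) (\<lambda>k. xi A I (e k)))"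

end

theory Submission
  imports Defs
begin

text \<open>
  The model \<open>xi\<close> preserves convex mixtures. If some scalar differs from \<open>1\<close>, every
  \<open>q \<in> (0,1]\<close> is a scalar, hence \<open>q T\<close> is a process with \<open>xi (q T) = q xi T\<close>; if all scalars
  are \<open>1\<close>, positive relations between processes have equal weight totals. Either way \<open>xi\<close>
  respects every real linear relation among processes of one type.

  Since states and effects span, there are states \<open>s\<^sub>x\<close>, rows \<open>r\<^sub>x\<close>, effects \<open>e\<^sub>y\<close> and
  columns \<open>c\<^sub>y\<close> with \<open>\<Sum> s\<^sub>x r\<^sub>x = 1 = \<Sum> c\<^sub>y e\<^sub>y\<close>. Put \<open>chi = \<Sum> xi(s\<^sub>x) r\<^sub>x\<close> and
  \<open>chi_inv = \<Sum> c\<^sub>y xi(e\<^sub>y)\<close>. Preservation of scalars gives \<open>xi(e) xi(T) xi(s) = e T s\<close>, whence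
  \<open>chi_inv xi(T) chi = T\<close>; linearity applied to \<open>1 = \<Sum> (r\<^sub>x c\<^sub>y) s\<^sub>x e\<^sub>y\<close> gives
  \<open>chi chi_inv = xi(1) = 1\<close>. The remaining claims follow by conjugation.
\<close>

section \<open>Finite sums of matrices\<close>

definition msum :: "nat \<Rightarrow> nat \<Rightarrow> 'i set \<Rightarrow> ('i \<Rightarrow> 'a :: comm_monoid_add mat) \<Rightarrow> 'a mat" where
  "msum r c X F = mat r c (\<lambda>(i,j). \<Sum>x\<in>X. F x $$ (i,j))"

lemma msum_carrier [simp]: "msum r c X F \<in> carrier_mat r c"
  and dim_row_msum [simp]: "dim_row (msum r c X F) = r"
  and dim_col_msum [simp]: "dim_col (msum r c X F) = c"
  by (simp_all add: msum_def)

lemma index_msum [simp]: "i < r \<Longrightarrow> j < c \<Longrightarrow> msum r c X F $$ (i,j) = (\<Sum>x\<in>X. F x $$ (i,j))"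
  by (simp add: msum_def)

lemma msum_cong: "X = Y \<Longrightarrow> (\<And>x. x \<in> Y \<Longrightarrow> F x = G x) \<Longrightarrow> msum r c X F = msum r c Y G"
  by (simp add: msum_def)

lemma msum_empty [simp]: "msum r c {} F = 0\<^sub>m r c"
  by (rule eq_matI) auto

lemma msum_reindex: "inj_on h K \<Longrightarrow> msum r c (h ` K) F = msum r c K (F \<circ> h)"
  by (simp add: msum_def sum.reindex)

lemma lin_comb_eq_msum:
  assumes "\<And>k. k \<in> K \<Longrightarrow> M k \<in> carrier_mat r c"
  shows "lin_comb r c K a M = msum r c K (\<lambda>k. a k \<cdot>\<^sub>m M k)"
proof -
  have "\<And>k. k \<in> K \<Longrightarrow> dim_row (M k) = r \<and> dim_col (M k) = c"
    using assms carrier_matD by blast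
  then show ?thesis by (intro eq_matI) (auto simp: lin_comb_def intro!: sum.cong)
qed

lemma smult_msum:
  fixes F :: "'i \<Rightarrow> 'a :: semiring_0 mat"
  assumes "\<And>x. x \<in> X \<Longrightarrow> F x \<in> carrier_mat r c"
  shows "k \<cdot>\<^sub>m msum r c X F = msum r c X (\<lambda>x. k \<cdot>\<^sub>m F x)"
proof -
  have "\<And>x. x \<in> X \<Longrightarrow> dim_row (F x) = r \<and> dim_col (F x) = c"
    using assms carrier_matD by blast
  then show ?thesis by (intro eq_matI) (auto simp: sum_distrib_left intro!: sum.cong)
qed

lemma mult_msum:
  fixes F :: "'i \<Rightarrow> 'a :: semiring_0 mat"
  assumes P: "P \<in> carrier_mat p r" and F: "\<And>x. x \<in> X \<Longrightarrow> F x \<in> carrier_mat r c"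
  shows "P * msum r c X F = msum p c X (\<lambda>x. P * F x)"
proof (rule eq_matI)
  fix i j assume ij: "i < dim_row (msum p c X (\<lambda>x. P * F x))" "j < dim_col (msum p c X (\<lambda>x. P * F x))"
  have "(P * msum r c X F) $$ (i,j) = (\<Sum>k<r. P $$ (i,k) * (\<Sum>x\<in>X. F x $$ (k,j)))"
    using P ij by (simp add: scalar_prod_def lessThan_atLeast0)
  also have "\<dots> = (\<Sum>x\<in>X. \<Sum>k<r. P $$ (i,k) * F x $$ (k,j))"
    by (simp add: sum_distrib_left sum.swap[of _ "{..<r}"])
  also have "\<dots> = msum p c X (\<lambda>x. P * F x) $$ (i,j)"
  proof -
    have "(P * F x) $$ (i,j) = (\<Sum>k<r. P $$ (i,k) * F x $$ (k,j))" if "x \<in> X" for x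
      using P F[OF that] ij by (simp add: scalar_prod_def lessThan_atLeast0)
    then show ?thesis using ij by simp
  qed
  finally show "(P * msum r c X F) $$ (i,j) = msum p c X (\<lambda>x. P * F x) $$ (i,j)" .
qed (use P in auto)

lemma msum_mult:
  fixes F :: "'i \<Rightarrow> 'a :: semiring_0 mat"
  assumes Q: "Q \<in> carrier_mat c q" and F: "\<And>x. x \<in> X \<Longrightarrow> F x \<in> carrier_mat r c"
  shows "msum r c X F * Q = msum r q X (\<lambda>x. F x * Q)"
proof (rule eq_matI)
  fix i j assume ij: "i < dim_row (msum r q X (\<lambda>x. F x * Q))" "j < dim_col (msum r q X (\<lambda>x. F x * Q))"
  have "(msum r c X F * Q) $$ (i,j) = (\<Sum>k<c. (\<Sum>x\<in>X. F x $$ (i,k)) * Q $$ (k,j))"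
    using Q ij by (simp add: scalar_prod_def lessThan_atLeast0)
  also have "\<dots> = (\<Sum>x\<in>X. \<Sum>k<c. F x $$ (i,k) * Q $$ (k,j))"
    by (simp add: sum_distrib_right sum.swap[of _ "{..<c}"])
  also have "\<dots> = msum r q X (\<lambda>x. F x * Q) $$ (i,j)"
  proof -
    have "(F x * Q) $$ (i,j) = (\<Sum>k<c. F x $$ (i,k) * Q $$ (k,j))" if "x \<in> X" for x
      using Q F[OF that] ij by (simp add: scalar_prod_def lessThan_atLeast0)
    then show ?thesis using ij by simp
  qed
  finally show "(msum r c X F * Q) $$ (i,j) = msum r q X (\<lambda>x. F x * Q) $$ (i,j)" .
qed (use Q in auto)

lemma msum_mult_msum:
  fixes F :: "'i \<Rightarrow> 'a :: semiring_0 mat"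
  assumes F: "\<And>x. x \<in> X \<Longrightarrow> F x \<in> carrier_mat r k" and G: "\<And>y. y \<in> Y \<Longrightarrow> G y \<in> carrier_mat k c"
  shows "msum r k X F * msum k c Y G = msum r c (X \<times> Y) (\<lambda>(x,y). F x * G y)"
proof -
  have "msum r k X F * msum k c Y G = msum r c X (\<lambda>x. F x * msum k c Y G)"
    by (rule msum_mult[OF msum_carrier F])
  also have "\<dots> = msum r c X (\<lambda>x. msum r c Y (\<lambda>y. F x * G y))"
    by (rule msum_cong[OF refl], rule mult_msum[OF F G])
  also have "\<dots> = msum r c (X \<times> Y) (\<lambda>(x,y). F x * G y)"
    by (rule eq_matI) (simp_all add: sum.cartesian_product split_def)
  finally show ?thesis .
qed

lemma transpose_msum:
  assumes "\<And>x. x \<in> X \<Longrightarrow> F x \<in> carrier_mat r c"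
  shows "transpose_mat (msum r c X F) = msum c r X (\<lambda>x. transpose_mat (F x))"
proof -
  have "\<And>x. x \<in> X \<Longrightarrow> dim_row (F x) = r \<and> dim_col (F x) = c"
    using assms carrier_matD by blast
  then show ?thesis by (intro eq_matI) (auto intro!: sum.cong)
qed

lemma index_msum_smult:
  assumes "\<And>x. x \<in> X \<Longrightarrow> F x \<in> carrier_mat r c" "i < r" "j < c"
  shows "msum r c X (\<lambda>x. w x \<cdot>\<^sub>m F x) $$ (i,j) = (\<Sum>x\<in>X. w x * F x $$ (i,j))"
proof -
  have "\<And>x. x \<in> X \<Longrightarrow> dim_row (F x) = r \<and> dim_col (F x) = c"
    using assms(1) carrier_matD by blast
  then show ?thesis using assms(2,3) by (auto intro!: sum.cong)
qed

lemma smult_smult_mat: "a \<cdot>\<^sub>m (b \<cdot>\<^sub>m A) = (a * b) \<cdot>\<^sub>m (A :: 'a :: semigroup_mult mat)"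
  by (rule eq_matI) (auto simp: mult.assoc)

lemma msum_scale_weights:
  fixes F :: "'i \<Rightarrow> 'a :: comm_semiring_0 mat"
  assumes "\<And>x. x \<in> X \<Longrightarrow> F x \<in> carrier_mat r c"
  shows "msum r c X (\<lambda>x. (k * w x) \<cdot>\<^sub>m F x) = k \<cdot>\<^sub>m msum r c X (\<lambda>x. w x \<cdot>\<^sub>m F x)"
  using assms by (simp add: smult_msum smult_smult_mat cong: msum_cong)

lemma lin_comb_reindex_msum:
  assumes "bij_betw h K X" "\<And>x. x \<in> X \<Longrightarrow> G x \<in> carrier_mat r c"
  shows "lin_comb r c K (p \<circ> h) (G \<circ> h) = msum r c X (\<lambda>x. p x \<cdot>\<^sub>m G x)"
proof -
  have "lin_comb r c K (p \<circ> h) (G \<circ> h) = msum r c K (\<lambda>k. (p \<circ> h) k \<cdot>\<^sub>m (G \<circ> h) k)"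
    by (rule lin_comb_eq_msum) (use assms in \<open>auto simp: bij_betw_def\<close>)
  also have "\<dots> = msum r c (h ` K) (\<lambda>x. p x \<cdot>\<^sub>m G x)"
    by (subst msum_reindex) (use assms(1) in \<open>auto simp: bij_betw_def comp_def\<close>)
  finally show ?thesis using assms(1) by (simp add: bij_betw_def)
qed

lemma smult_mat_cancel:
  fixes A :: "'a :: field mat"
  assumes "k \<noteq> 0" and eq: "k \<cdot>\<^sub>m A = k \<cdot>\<^sub>m B"
  shows "A = B"
proof (rule eq_matI)
  have dims: "dim_row A = dim_row B" "dim_col A = dim_col B"
    using arg_cong[OF eq, of dim_row] arg_cong[OF eq, of dim_col] by simp_all
  then show "dim_row A = dim_row B" "dim_col A = dim_col B" by simp_all
  fix i j assume "i < dim_row B" "j < dim_col B"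
  then have "k * A $$ (i,j) = k * B $$ (i,j)"
    using arg_cong[OF eq, of "\<lambda>M. M $$ (i,j)"] dims by simp
  then show "A $$ (i,j) = B $$ (i,j)" using assms(1) by simp
qed

lemma mult_msum_smult_mult:
  fixes F :: "'i \<Rightarrow> 'a :: comm_semiring_0 mat"
  assumes P: "P \<in> carrier_mat p r" and Q: "Q \<in> carrier_mat c q" and F: "\<And>x. x \<in> X \<Longrightarrow> F x \<in> carrier_mat r c"
  shows "P * msum r c X (\<lambda>x. w x \<cdot>\<^sub>m F x) * Q = msum p q X (\<lambda>x. w x \<cdot>\<^sub>m (P * F x * Q))"
proof -
  have PF: "\<And>x. x \<in> X \<Longrightarrow> P * F x \<in> carrier_mat p c" using P F by (rule mult_carrier_mat)
  have "P * msum r c X (\<lambda>x. w x \<cdot>\<^sub>m F x) = msum p c X (\<lambda>x. P * (w x \<cdot>\<^sub>m F x))"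
    using P F by (intro mult_msum) auto
  also have "\<dots> = msum p c X (\<lambda>x. w x \<cdot>\<^sub>m (P * F x))"
    using P F by (intro msum_cong) (auto intro: mult_smult_distrib)
  finally have "P * msum r c X (\<lambda>x. w x \<cdot>\<^sub>m F x) * Q = msum p c X (\<lambda>x. w x \<cdot>\<^sub>m (P * F x)) * Q"
    by simp
  also have "\<dots> = msum p q X (\<lambda>x. w x \<cdot>\<^sub>m (P * F x) * Q)"
    using Q PF by (intro msum_mult) auto
  also have "\<dots> = msum p q X (\<lambda>x. w x \<cdot>\<^sub>m (P * F x * Q))"
    using Q PF by (intro msum_cong) (auto intro: mult_smult_assoc_mat)
  finally show ?thesis .
qed

lemma index_mult_msum_mult:
  fixes F :: "'i \<Rightarrow> 'a :: comm_semiring_0 mat"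
  assumes P: "P \<in> carrier_mat 1 r" and Q: "Q \<in> carrier_mat c 1" and F: "\<And>x. x \<in> X \<Longrightarrow> F x \<in> carrier_mat r c"
  shows "(P * msum r c X (\<lambda>x. w x \<cdot>\<^sub>m F x) * Q) $$ (0,0) = (\<Sum>x\<in>X. w x * (P * F x * Q) $$ (0,0))"
proof -
  have "(P * msum r c X (\<lambda>x. w x \<cdot>\<^sub>m F x) * Q) $$ (0,0) = msum 1 1 X (\<lambda>x. w x \<cdot>\<^sub>m (P * F x * Q)) $$ (0,0)"
    by (simp only: mult_msum_smult_mult[OF P Q F])
  also have "\<dots> = (\<Sum>x\<in>X. w x * (P * F x * Q) $$ (0,0))"
    by (rule index_msum_smult) (use P Q F in \<open>auto intro: mult_carrier_mat\<close>)
  finally show ?thesis .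
qed

lemma mult_mat_1_1:
  fixes S :: "'a :: comm_semiring_0 mat"
  assumes "S \<in> carrier_mat p 1" "K \<in> carrier_mat 1 1"
  shows "S * K = K $$ (0,0) \<cdot>\<^sub>m S"
  using assms by (intro eq_matI) (auto simp: scalar_prod_def mult.commute)

lemma index_mult_col_row:
  assumes "S \<in> carrier_mat p 1" "R \<in> carrier_mat 1 q" "i < p" "j < q"
  shows "(S * R) $$ (i,j) = S $$ (i,0) * R $$ (0,j)"
  using assms by (simp add: scalar_prod_def)

lemma msum_sandwich:
  fixes C :: "'i \<Rightarrow> 'a :: comm_semiring_0 mat"
  assumes C: "\<And>y. y \<in> Y \<Longrightarrow> C y \<in> carrier_mat p 1" and E: "\<And>y. y \<in> Y \<Longrightarrow> E y \<in> carrier_mat 1 q"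
    and M: "M \<in> carrier_mat q q'"
    and S: "\<And>x. x \<in> X \<Longrightarrow> S x \<in> carrier_mat q' 1" and R: "\<And>x. x \<in> X \<Longrightarrow> R x \<in> carrier_mat 1 p'"
  shows "msum p q Y (\<lambda>y. C y * E y) * M * msum q' p' X (\<lambda>x. S x * R x)
    = msum p p' (Y \<times> X) (\<lambda>(y,x). C y * (E y * M * S x) * R x)"
proof -
  have CE: "\<And>y. y \<in> Y \<Longrightarrow> C y * E y \<in> carrier_mat p q" and SR: "\<And>x. x \<in> X \<Longrightarrow> S x * R x \<in> carrier_mat q' p'"
    using C E S R by (meson mult_carrier_mat)+
  have "msum p q Y (\<lambda>y. C y * E y) * M = msum p q' Y (\<lambda>y. C y * E y * M)"
    by (rule msum_mult[OF M CE])
  moreover have "\<dots> * msum q' p' X (\<lambda>x. S x * R x) = msum p p' (Y \<times> X) (\<lambda>(y,x). C y * E y * M * (S x * R x))"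
    using CE M SR by (intro msum_mult_msum) (meson mult_carrier_mat)+
  moreover have "C y * E y * M * (S x * R x) = C y * (E y * M * S x) * R x" if y: "y \<in> Y" and x: "x \<in> X" for y x
  proof -
    have CEM: "C y * E y * M \<in> carrier_mat p q'" and EM: "E y * M \<in> carrier_mat 1 q'"
      using C[OF y] E[OF y] M by (meson mult_carrier_mat)+
    have "C y * E y * M * S x = C y * (E y * M) * S x"
      using assoc_mult_mat[OF C[OF y] E[OF y] M] by simp
    also have "\<dots> = C y * (E y * M * S x)"
      by (rule assoc_mult_mat[OF C[OF y] EM S[OF x]])
    finally have "C y * E y * M * S x = C y * (E y * M * S x)" .
    with assoc_mult_mat[OF CEM S[OF x] R[OF x]] show ?thesis by simp
  qed
  ultimately show ?thesis by (auto intro!: msum_cong)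
qed

lemma msum_outer_products:
  fixes S :: "'i \<Rightarrow> 'a :: comm_semiring_0 mat"
  assumes S: "\<And>x. x \<in> X \<Longrightarrow> S x \<in> carrier_mat p 1" and R: "\<And>x. x \<in> X \<Longrightarrow> R x \<in> carrier_mat 1 q"
    and C: "\<And>y. y \<in> Y \<Longrightarrow> C y \<in> carrier_mat q 1" and E: "\<And>y. y \<in> Y \<Longrightarrow> E y \<in> carrier_mat 1 p'"
  shows "msum p q X (\<lambda>x. S x * R x) * msum q p' Y (\<lambda>y. C y * E y)
    = msum p p' (X \<times> Y) (\<lambda>(x,y). (R x * C y) $$ (0,0) \<cdot>\<^sub>m (S x * E y))"
proof -
  have "msum p q X (\<lambda>x. S x * R x) * msum q p' Y (\<lambda>y. C y * E y)
      = msum p p' (X \<times> Y) (\<lambda>(x,y). S x * R x * (C y * E y))"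
    using S R C E by (intro msum_mult_msum) (meson mult_carrier_mat)+
  moreover have "S x * R x * (C y * E y) = (R x * C y) $$ (0,0) \<cdot>\<^sub>m (S x * E y)" if "x \<in> X" "y \<in> Y" for x y
  proof -
    have RC: "R x * C y \<in> carrier_mat 1 1" using R[OF that(1)] C[OF that(2)] by simp
    have SR: "S x * R x \<in> carrier_mat p q" using S[OF that(1)] R[OF that(1)] by (rule mult_carrier_mat)
    have "S x * R x * (C y * E y) = S x * R x * C y * E y"
      using assoc_mult_mat[OF SR C[OF that(2)] E[OF that(2)]] by simp
    also have "\<dots> = S x * (R x * C y) * E y"
      using assoc_mult_mat[OF S[OF that(1)] R[OF that(1)] C[OF that(2)]] by simp
    also have "\<dots> = ((R x * C y) $$ (0,0) \<cdot>\<^sub>m S x) * E y"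
      by (simp only: mult_mat_1_1[OF S[OF that(1)] RC])
    also have "\<dots> = (R x * C y) $$ (0,0) \<cdot>\<^sub>m (S x * E y)"
      by (rule mult_smult_assoc_mat[OF S[OF that(1)] E[OF that(2)]])
    finally show ?thesis .
  qed
  ultimately show ?thesis by (auto intro!: msum_cong)
qed

lemma conjugate_inverse_cancel:
  fixes M :: "'a :: semiring_1 mat"
  assumes L: "L \<in> carrier_mat m k" and L': "L' \<in> carrier_mat k m"
    and R: "R \<in> carrier_mat n l" and R': "R' \<in> carrier_mat l n" and M: "M \<in> carrier_mat m n"
    and LL': "L * L' = 1\<^sub>m m" and RR': "R * R' = 1\<^sub>m n"
  shows "L * (L' * M * R) * R' = M"
proof -
  have L'M: "L' * M \<in> carrier_mat k n" using L' M by (rule mult_carrier_mat)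
  have "L * (L' * M * R) * R' = L * (L' * M * R * R')"
    by (rule assoc_mult_mat[OF L mult_carrier_mat[OF L'M R] R'])
  also have "L' * M * R * R' = L' * M"
    using assoc_mult_mat[OF L'M R R'] RR' right_mult_one_mat[OF L'M] by simp
  also have "L * (L' * M) = M"
    using assoc_mult_mat[OF L L' M] LL' left_mult_one_mat[OF M] by simp
  finally show ?thesis .
qed

section \<open>Resolutions of the identity\<close>

lemma transpose_lin_comb:
  assumes "\<And>k. k \<in> K \<Longrightarrow> M k \<in> carrier_mat r c"
  shows "transpose_mat (lin_comb r c K a M) = lin_comb c r K a (\<lambda>k. transpose_mat (M k))"
proof -
  have "\<And>k. k \<in> K \<Longrightarrow> dim_row (M k) = r \<and> dim_col (M k) = c"
    using assms carrier_matD by blast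
  then show ?thesis by (intro eq_matI) (auto simp: lin_comb_def intro!: sum.cong)
qed

lemma spanning_columns_resolve_identity:
  fixes P :: "real mat set"
  assumes span: "\<forall>v \<in> carrier_mat d 1. \<exists>K a s. finite K \<and> (\<forall>k\<in>K. s k \<in> P) \<and> v = lin_comb d 1 K a s"
    and P: "P \<subseteq> carrier_mat d 1"
  shows "\<exists>(X :: (nat \<times> nat) set) s r. finite X \<and> (\<forall>x\<in>X. s x \<in> P \<and> r x \<in> carrier_mat 1 d)
           \<and> msum d d X (\<lambda>x. s x * r x) = 1\<^sub>m d"
proof -
  define e :: "nat \<Rightarrow> real mat" where "e i = mat d 1 (\<lambda>(l,_). of_bool (l = i))" for i
  have "\<forall>i. \<exists>K a s. i < d \<longrightarrow> finite K \<and> (\<forall>k\<in>K. s k \<in> P) \<and> e i = lin_comb d 1 K a s"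
    using span by (auto simp: e_def)
  then obtain K a v where Kav: "\<And>i. i < d \<Longrightarrow> finite (K i) \<and> (\<forall>k\<in>K i. v i k \<in> P) \<and> e i = lin_comb d 1 (K i) (a i) (v i)"
    by metis
  define X where "X = Sigma {..<d} K"
  define r :: "nat \<Rightarrow> nat \<Rightarrow> real mat" where "r i k = mat 1 d (\<lambda>(_,m). a i k * of_bool (m = i))" for i k
  have v_carrier: "v i k \<in> carrier_mat d 1" if "(i,k) \<in> X" for i k
    using Kav P that by (auto simp: X_def)
  have r_carrier: "r i k \<in> carrier_mat 1 d" for i k
    by (simp add: r_def)
  have "msum d d X (\<lambda>(i,k). v i k * r i k) = 1\<^sub>m d"
  proof (rule eq_matI)
    fix l m assume lm: "l < dim_row (1\<^sub>m d)" "m < dim_col (1\<^sub>m d)"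
    have "(v i k * r i k) $$ (l,m) = of_bool (m = i) * (a i k * v i k $$ (l,0))" if "(i,k) \<in> X" for i k
      using index_mult_col_row[OF v_carrier[OF that] r_carrier, of l m] lm by (simp add: r_def)
    then have "msum d d X (\<lambda>(i,k). v i k * r i k) $$ (l,m) = (\<Sum>(i,k)\<in>X. of_bool (m = i) * (a i k * v i k $$ (l,0)))"
      using lm by (auto intro!: sum.cong)
    also have "\<dots> = (\<Sum>i<d. \<Sum>k\<in>K i. of_bool (m = i) * (a i k * v i k $$ (l,0)))"
      unfolding X_def by (rule sum.Sigma[symmetric]) (use Kav in auto)
    also have "\<dots> = (\<Sum>i<d. of_bool (m = i) * (\<Sum>k\<in>K i. a i k * v i k $$ (l,0)))"
      by (simp only: sum_distrib_left)
    also have "\<dots> = (\<Sum>i<d. of_bool (m = i) * e i $$ (l,0))"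
      using Kav lm by (auto simp: lin_comb_def intro!: sum.cong)
    also have "\<dots> = (\<Sum>i<d. if i = m then of_bool (l = m) else 0)"
      using lm by (intro sum.cong) (auto simp: e_def)
    also have "\<dots> = 1\<^sub>m d $$ (l,m)"
      using lm by simp
    finally show "msum d d X (\<lambda>(i,k). v i k * r i k) $$ (l,m) = 1\<^sub>m d $$ (l,m)" .
  qed auto
  moreover have "(\<lambda>(i,k). v i k * r i k) = (\<lambda>x. case_prod v x * case_prod r x)"
    by auto
  moreover have "finite X" using Kav by (auto simp: X_def)
  moreover have "\<forall>x\<in>X. case_prod v x \<in> P \<and> case_prod r x \<in> carrier_mat 1 d"
    using Kav r_carrier by (auto simp: X_def)
  ultimately show ?thesis
    by (intro exI[of _ X] exI[of _ "case_prod v"] exI[of _ "case_prod r"]) simp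
qed

lemma spanning_rows_resolve_identity:
  fixes P :: "real mat set"
  assumes span: "\<forall>w \<in> carrier_mat 1 d. \<exists>K a e. finite K \<and> (\<forall>k\<in>K. e k \<in> P) \<and> w = lin_comb 1 d K a e"
    and P: "P \<subseteq> carrier_mat 1 d"
  shows "\<exists>(X :: (nat \<times> nat) set) e c. finite X \<and> (\<forall>x\<in>X. e x \<in> P \<and> c x \<in> carrier_mat d 1)
           \<and> msum d d X (\<lambda>x. c x * e x) = 1\<^sub>m d"
proof -
  have "\<forall>v \<in> carrier_mat d 1. \<exists>K a s. finite K \<and> (\<forall>k\<in>K. s k \<in> transpose_mat ` P) \<and> v = lin_comb d 1 K a s"
  proof
    fix v :: "real mat" assume v: "v \<in> carrier_mat d 1"
    have "transpose_mat v \<in> carrier_mat 1 d" using v by simp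
    from span[rule_format, OF this] obtain K a e
      where K: "finite K" "\<forall>k\<in>K. e k \<in> P" and e: "transpose_mat v = lin_comb 1 d K a e"
      by blast
    have "v = transpose_mat (transpose_mat v)"
      by simp
    also have "\<dots> = transpose_mat (lin_comb 1 d K a e)"
      by (simp only: e)
    also have "\<dots> = lin_comb d 1 K a (\<lambda>k. transpose_mat (e k))"
      by (rule transpose_lin_comb) (use K P in blast)
    finally show "\<exists>K a s. finite K \<and> (\<forall>k\<in>K. s k \<in> transpose_mat ` P) \<and> v = lin_comb d 1 K a s"
      using K by (intro exI[of _ K] exI[of _ a] exI[of _ "\<lambda>k. transpose_mat (e k)"]) blast
  qed
  moreover have tP: "transpose_mat ` P \<subseteq> carrier_mat d 1" using P by auto
  ultimately have "\<exists>(X :: (nat \<times> nat) set) s r. finite X \<and> (\<forall>x\<in>X. s x \<in> transpose_mat ` P \<and> r x \<in> carrier_mat 1 d)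
           \<and> msum d d X (\<lambda>x. s x * r x) = 1\<^sub>m d"
    by (rule spanning_columns_resolve_identity)
  then obtain X :: "(nat \<times> nat) set" and s r where
    X: "finite X" and sr: "\<forall>x\<in>X. s x \<in> transpose_mat ` P \<and> r x \<in> carrier_mat 1 d"
    and one: "msum d d X (\<lambda>x. s x * r x) = 1\<^sub>m d"
    by blast
  have s: "\<And>x. x \<in> X \<Longrightarrow> s x \<in> carrier_mat d 1" and r: "\<And>x. x \<in> X \<Longrightarrow> r x \<in> carrier_mat 1 d"
    using sr P tP by blast+
  have "msum d d X (\<lambda>x. transpose_mat (r x) * transpose_mat (s x)) = msum d d X (\<lambda>x. transpose_mat (s x * r x))"
    by (rule msum_cong[OF refl], rule transpose_mult[OF s r, symmetric])
  also have "\<dots> = transpose_mat (msum d d X (\<lambda>x. s x * r x))"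
    by (rule transpose_msum[symmetric]) (use s r in \<open>meson mult_carrier_mat\<close>)
  finally have "msum d d X (\<lambda>x. transpose_mat (r x) * transpose_mat (s x)) = 1\<^sub>m d"
    by (simp add: one)
  moreover have "\<forall>x\<in>X. transpose_mat (s x) \<in> P \<and> transpose_mat (r x) \<in> carrier_mat d 1"
    using sr by auto
  ultimately show ?thesis
    using X by (intro exI[of _ X] exI[of _ "\<lambda>x. transpose_mat (s x)"] exI[of _ "\<lambda>x. transpose_mat (r x)"]) simp
qed


section \<open>Linearity of an ontological model\<close>

definition scalar_mat :: "real \<Rightarrow> real mat" where
  "scalar_mat q = mat 1 1 (\<lambda>_. q)"

lemma one_mat_1: "1\<^sub>m 1 = scalar_mat 1"
  by (rule eq_matI) (auto simp: scalar_mat_def)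

lemma carrier_mat_1_1_eq_scalar_mat: "p \<in> carrier_mat 1 1 \<Longrightarrow> p = scalar_mat (p $$ (0,0))"
  by (rule eq_matI) (auto simp: scalar_mat_def)

lemma kron_scalar_mat: "kron T (scalar_mat q) = q \<cdot>\<^sub>m T"
  by (rule eq_matI) (auto simp: kron_def scalar_mat_def)

lemma kron_scalar_mat_scalar_mat: "kron (scalar_mat p) (scalar_mat q) = scalar_mat (p * q)"
  by (rule eq_matI) (auto simp: kron_def scalar_mat_def)

locale gpt_ontological_model =
  fixes sdim :: "'sys \<Rightarrow> nat" and tens :: "'sys \<Rightarrow> 'sys \<Rightarrow> 'sys" and I :: 'sys
    and proc :: "'sys \<Rightarrow> 'sys \<Rightarrow> real mat set" and u :: "'sys \<Rightarrow> real mat"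
    and n :: "'sys \<Rightarrow> nat" and xi :: "'sys \<Rightarrow> 'sys \<Rightarrow> real mat \<Rightarrow> real mat"
  assumes gpt: "tl_gpt sdim tens I proc u"
    and model: "ontological_model sdim tens I proc u n xi"
begin

lemma tens_unit: "tens A I = A"
  using gpt unfolding tl_gpt_def by auto

lemma sdim_unit: "sdim I = 1"
  using gpt unfolding tl_gpt_def by auto

lemma proc_carrier: "T \<in> proc A B \<Longrightarrow> T \<in> carrier_mat (sdim B) (sdim A)"
  using gpt unfolding tl_gpt_def by (meson subsetD)

lemma proc_mult: "S \<in> proc B C \<Longrightarrow> T \<in> proc A B \<Longrightarrow> S * T \<in> proc A C"
  using gpt unfolding tl_gpt_def by auto

lemma proc_kron: "T \<in> proc A B \<Longrightarrow> T' \<in> proc A' B' \<Longrightarrow> kron T T' \<in> proc (tens A A') (tens B B')"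
  using gpt unfolding tl_gpt_def by auto

lemma proc_one: "1\<^sub>m (sdim A) \<in> proc A A"
  using gpt unfolding tl_gpt_def by auto

lemma states_span:
  "\<forall>v \<in> carrier_mat (sdim A) 1. \<exists>K a s. finite K \<and> (\<forall>k\<in>K. s k \<in> proc I A) \<and> v = lin_comb (sdim A) 1 K a s"
  using gpt unfolding tl_gpt_def by auto

lemma effects_span:
  "\<forall>w \<in> carrier_mat 1 (sdim A). \<exists>K a e. finite K \<and> (\<forall>k\<in>K. e k \<in> proc A I) \<and> w = lin_comb 1 (sdim A) K a e"
  using gpt unfolding tl_gpt_def by auto

lemma scalar_bounds: "p \<in> proc I I \<Longrightarrow> 0 \<le> p $$ (0,0) \<and> p $$ (0,0) \<le> 1"
  using gpt unfolding tl_gpt_def by auto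

lemma proc_convex:
  "convex_weights K p \<Longrightarrow> \<forall>k\<in>K. T k \<in> proc A B \<Longrightarrow> lin_comb (sdim B) (sdim A) K p T \<in> proc A B"
  using gpt unfolding tl_gpt_def by auto

lemma u_proc: "u A \<in> proc A I"
  using gpt unfolding tl_gpt_def by auto

lemma n_unit: "n I = 1"
  using model unfolding ontological_model_def by auto

lemma xi_substoch: "T \<in> proc A B \<Longrightarrow> substoch (n A) (n B) (xi A B T)"
  using model unfolding ontological_model_def by auto

lemma xi_mult: "S \<in> proc B C \<Longrightarrow> T \<in> proc A B \<Longrightarrow> xi A C (S * T) = xi B C S * xi A B T"
  using model unfolding ontological_model_def by auto

lemma xi_kron:
  "T \<in> proc A B \<Longrightarrow> T' \<in> proc A' B' \<Longrightarrow> xi (tens A A') (tens B B') (kron T T') = kron (xi A B T) (xi A' B' T')"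
  using model unfolding ontological_model_def by auto

lemma xi_one: "xi A A (1\<^sub>m (sdim A)) = 1\<^sub>m (n A)"
  using model unfolding ontological_model_def by auto

lemma xi_u: "xi A I (u A) = ones_row (n A)"
  using model unfolding ontological_model_def by auto

lemma xi_scalar: "p \<in> proc I I \<Longrightarrow> xi I I p = p"
  using model unfolding ontological_model_def by auto

lemma xi_convex:
  "convex_weights K p \<Longrightarrow> \<forall>k\<in>K. T k \<in> proc A B \<Longrightarrow> S \<in> proc A B \<Longrightarrow> S = lin_comb (sdim B) (sdim A) K p T \<Longrightarrow>
     xi A B S = lin_comb (n B) (n A) K p (\<lambda>k. xi A B (T k))"
  using model unfolding ontological_model_def by auto

lemma xi_coarse_graining:
  "finite K \<Longrightarrow> \<forall>k\<in>K. e k \<in> proc A I \<Longrightarrow> E \<in> proc A I \<Longrightarrow> E = lin_comb 1 (sdim A) K (\<lambda>_. 1) e \<Longrightarrow>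
     xi A I E = lin_comb 1 (n A) K (\<lambda>_. 1) (\<lambda>k. xi A I (e k))"
  using model unfolding ontological_model_def by auto

lemma xi_carrier: "T \<in> proc A B \<Longrightarrow> xi A B T \<in> carrier_mat (n B) (n A)"
  using xi_substoch by (simp add: substoch_def)

lemma state_carrier: "s \<in> proc I A \<Longrightarrow> s \<in> carrier_mat (sdim A) 1"
  using proc_carrier[of s I A] by (simp add: sdim_unit)

lemma effect_carrier: "e \<in> proc A I \<Longrightarrow> e \<in> carrier_mat 1 (sdim A)"
  using proc_carrier[of e A I] by (simp add: sdim_unit)

lemma xi_state_carrier: "s \<in> proc I A \<Longrightarrow> xi I A s \<in> carrier_mat (n A) 1"
  using xi_carrier[of s I A] by (simp add: n_unit)

lemma xi_effect_carrier: "e \<in> proc A I \<Longrightarrow> xi A I e \<in> carrier_mat 1 (n A)"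
  using xi_carrier[of e A I] by (simp add: n_unit)

lemma xi_scalar_sandwich:
  assumes e: "e \<in> proc B I" and T: "T \<in> proc A B" and s: "s \<in> proc I A"
  shows "xi B I e * xi A B T * xi I A s = e * T * s"
proof -
  have eT: "e * T \<in> proc A I" by (rule proc_mult[OF e T])
  have "xi B I e * xi A B T * xi I A s = xi I I (e * T * s)"
    by (simp add: xi_mult[OF eT s] xi_mult[OF e T])
  also have "\<dots> = e * T * s" by (rule xi_scalar[OF proc_mult[OF eT s]])
  finally show ?thesis .
qed

lemma smult_in_proc:
  assumes q: "scalar_mat q \<in> proc I I" and T: "T \<in> proc A B"
  shows "q \<cdot>\<^sub>m T \<in> proc A B"
  using proc_kron[OF T q] by (simp add: tens_unit kron_scalar_mat)

lemma xi_smult: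
  assumes q: "scalar_mat q \<in> proc I I" and T: "T \<in> proc A B"
  shows "xi A B (q \<cdot>\<^sub>m T) = q \<cdot>\<^sub>m xi A B T"
  using xi_kron[OF T q] by (simp add: tens_unit kron_scalar_mat xi_scalar[OF q])

lemma scalar_mat_power_in_proc:
  assumes "scalar_mat p \<in> proc I I"
  shows "scalar_mat (p ^ k) \<in> proc I I"
proof (induction k)
  case 0
  show ?case using proc_one[of I] unfolding sdim_unit one_mat_1 power_0 .
next
  case (Suc k)
  show ?case using proc_kron[OF assms Suc] by (simp add: tens_unit kron_scalar_mat_scalar_mat)
qed

text \<open>A scalar \<open>r < 1\<close> has powers below any \<open>q > 0\<close>, and \<open>q\<close> is a convex combination of \<open>1\<close> and such a power.\<close>

lemma scalar_mat_in_proc: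
  assumes p: "p \<in> proc I I" "p \<noteq> 1\<^sub>m 1" and q: "0 < q" "q \<le> 1"
  shows "scalar_mat q \<in> proc I I"
proof -
  define r where "r = p $$ (0,0)"
  have p_eq: "p = scalar_mat r"
    unfolding r_def by (rule carrier_mat_1_1_eq_scalar_mat) (use proc_carrier[OF p(1)] sdim_unit in simp)
  have "r \<noteq> 1" using p(2) p_eq one_mat_1 by auto
  then have r: "0 \<le> r" "r < 1" using scalar_bounds[OF p(1)] r_def by auto
  obtain k where k: "r ^ k < q" using real_arch_pow_inv[OF q(1) r(2)] by blast
  define t where "t = (q - r ^ k) / (1 - r ^ k)"
  have rk: "0 \<le> r ^ k" "r ^ k < 1" using r k q by auto
  have t: "0 \<le> t" "t \<le> 1" using rk k q by (simp_all add: t_def divide_le_eq)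
  have "t * (1 - r ^ k) = q - r ^ k" using rk by (simp add: t_def)
  moreover have "t + (1 - t) * r ^ k = r ^ k + t * (1 - r ^ k)" by (simp add: algebra_simps)
  ultimately have tq: "t + (1 - t) * r ^ k = q" by simp
  define w where "w i = (if i = 0 then t else 1 - t)" for i :: nat
  define G where "G i = (if i = 0 then scalar_mat 1 else scalar_mat (r ^ k))" for i :: nat
  have "convex_weights {0,1} w" using t by (auto simp: convex_weights_def w_def)
  moreover have "\<forall>i\<in>{0,1}. G i \<in> proc I I"
    using scalar_mat_power_in_proc[of r k] scalar_mat_power_in_proc[of r 0] p(1) p_eq by (auto simp: G_def)
  ultimately have "lin_comb (sdim I) (sdim I) {0,1} w G \<in> proc I I" by (rule proc_convex)
  moreover have "lin_comb (sdim I) (sdim I) {0,1} w G = scalar_mat q"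
    using tq by (intro eq_matI) (auto simp: lin_comb_def sdim_unit w_def G_def scalar_mat_def)
  ultimately show ?thesis by simp
qed

lemma convex_msum:
  assumes X: "finite X" and p: "\<And>x. x \<in> X \<Longrightarrow> 0 \<le> p x" "sum p X = 1"
    and G: "\<And>x. x \<in> X \<Longrightarrow> G x \<in> proc A B"
  shows "msum (sdim B) (sdim A) X (\<lambda>x. p x \<cdot>\<^sub>m G x) \<in> proc A B"
    and "xi A B (msum (sdim B) (sdim A) X (\<lambda>x. p x \<cdot>\<^sub>m G x)) = msum (n B) (n A) X (\<lambda>x. p x \<cdot>\<^sub>m xi A B (G x))"
proof -
  obtain h where h: "bij_betw h {0..<card X} X" using ex_bij_betw_nat_finite[OF X] by blast
  have hX: "\<And>k. k \<in> {0..<card X} \<Longrightarrow> h k \<in> X" using h bij_betwE by blast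
  have w: "convex_weights {0..<card X} (p \<circ> h)"
    using p hX sum.reindex_bij_betw[OF h, of p] by (auto simp: convex_weights_def)
  have Gh: "\<forall>k\<in>{0..<card X}. (G \<circ> h) k \<in> proc A B" using G hX by simp
  have eq: "lin_comb (sdim B) (sdim A) {0..<card X} (p \<circ> h) (G \<circ> h) = msum (sdim B) (sdim A) X (\<lambda>x. p x \<cdot>\<^sub>m G x)"
    using h G proc_carrier by (intro lin_comb_reindex_msum) auto
  have xi_eq: "lin_comb (n B) (n A) {0..<card X} (p \<circ> h) (\<lambda>k. xi A B ((G \<circ> h) k)) = msum (n B) (n A) X (\<lambda>x. p x \<cdot>\<^sub>m xi A B (G x))"
    using lin_comb_reindex_msum[OF h, of "\<lambda>x. xi A B (G x)" "n B" "n A" p] G xi_carrier by (simp add: comp_def)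
  show "msum (sdim B) (sdim A) X (\<lambda>x. p x \<cdot>\<^sub>m G x) \<in> proc A B"
    using proc_convex[OF w Gh] unfolding eq .
  then show "xi A B (msum (sdim B) (sdim A) X (\<lambda>x. p x \<cdot>\<^sub>m G x)) = msum (n B) (n A) X (\<lambda>x. p x \<cdot>\<^sub>m xi A B (G x))"
    using xi_convex[OF w Gh _ eq[symmetric]] xi_eq by simp
qed

definition state_resolution :: "'sys \<Rightarrow> 'i set \<Rightarrow> ('i \<Rightarrow> real mat) \<Rightarrow> ('i \<Rightarrow> real mat) \<Rightarrow> bool" where
  "state_resolution A X s r \<longleftrightarrow> finite X \<and> (\<forall>x\<in>X. s x \<in> proc I A \<and> r x \<in> carrier_mat 1 (sdim A))
     \<and> msum (sdim A) (sdim A) X (\<lambda>x. s x * r x) = 1\<^sub>m (sdim A)"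

definition effect_resolution :: "'sys \<Rightarrow> 'i set \<Rightarrow> ('i \<Rightarrow> real mat) \<Rightarrow> ('i \<Rightarrow> real mat) \<Rightarrow> bool" where
  "effect_resolution A Y e c \<longleftrightarrow> finite Y \<and> (\<forall>y\<in>Y. e y \<in> proc A I \<and> c y \<in> carrier_mat (sdim A) 1)
     \<and> msum (sdim A) (sdim A) Y (\<lambda>y. c y * e y) = 1\<^sub>m (sdim A)"

lemma state_resolution_exists: "\<exists>(X :: (nat \<times> nat) set) s r. state_resolution A X s r"
  unfolding state_resolution_def
  by (rule spanning_columns_resolve_identity[OF states_span]) (use state_carrier in blast)

lemma effect_resolution_exists: "\<exists>(Y :: (nat \<times> nat) set) e c. effect_resolution A Y e c"
  unfolding effect_resolution_def
  by (rule spanning_rows_resolve_identity[OF effects_span]) (use effect_carrier in blast)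

lemma state_exists:
  assumes "0 < sdim A"
  obtains s where "s \<in> proc I A"
proof -
  obtain X :: "(nat \<times> nat) set" and s r where res: "state_resolution A X s r"
    using state_resolution_exists by blast
  have "X \<noteq> {}"
  proof
    assume "X = {}"
    then have "(0\<^sub>m (sdim A) (sdim A) :: real mat) = 1\<^sub>m (sdim A)"
      using res by (simp add: state_resolution_def)
    from arg_cong[OF this, of "\<lambda>M. M $$ (0,0)"] show False using assms by simp
  qed
  then show ?thesis using res that by (auto simp: state_resolution_def)
qed

text \<open>For a zero-dimensional system the deterministic effect is the empty coarse-graining.\<close>

lemma n_eq_0_if_sdim_eq_0:
  assumes "sdim A = 0"
  shows "n A = 0"
proof (rule ccontr)
  assume n: "n A \<noteq> 0"
  have "u A \<in> carrier_mat 1 0" using effect_carrier[OF u_proc[of A]] assms by simp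
  then have "u A = lin_comb 1 (sdim A) {} (\<lambda>_. 1) (\<lambda>_. u A)"
    using assms by (intro eq_matI) (auto simp: lin_comb_def)
  then have "xi A I (u A) = lin_comb 1 (n A) {} (\<lambda>_. 1) (\<lambda>_. xi A I (u A))"
    using xi_coarse_graining[of "{}" "\<lambda>_. u A" A "u A"] u_proc by simp
  then have "ones_row (n A) $$ (0,0) = 0"
    using n by (simp add: xi_u lin_comb_def)
  then show False using n by (simp add: ones_row_def)
qed

lemma weight_sums_eq_if_scalars_trivial:
  assumes triv: "proc I I \<subseteq> {1\<^sub>m 1}" and dim: "0 < sdim A"
    and T: "\<And>x. x \<in> X \<Longrightarrow> T x \<in> proc A B" and U: "\<And>x. x \<in> X \<Longrightarrow> U x \<in> proc A B"
    and rel: "msum (sdim B) (sdim A) X (\<lambda>x. a x \<cdot>\<^sub>m T x) = msum (sdim B) (sdim A) X (\<lambda>x. b x \<cdot>\<^sub>m U x)"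
  shows "sum a X = sum b X"
proof -
  obtain s where s: "s \<in> proc I A" using state_exists[OF dim] by blast
  have total: "(u B * msum (sdim B) (sdim A) X (\<lambda>x. w x \<cdot>\<^sub>m V x) * s) $$ (0,0) = sum w X"
    if V: "\<And>x. x \<in> X \<Longrightarrow> V x \<in> proc A B" for w :: "'a \<Rightarrow> real" and V
  proof -
    have "(u B * msum (sdim B) (sdim A) X (\<lambda>x. w x \<cdot>\<^sub>m V x) * s) $$ (0,0) = (\<Sum>x\<in>X. w x * (u B * V x * s) $$ (0,0))"
      using effect_carrier[OF u_proc] state_carrier[OF s] V proc_carrier by (intro index_mult_msum_mult) auto
    also have "\<dots> = sum w X"
    proof (rule sum.cong)
      fix x assume "x \<in> X"
      then have "u B * V x * s = 1\<^sub>m 1" using triv proc_mult[OF proc_mult[OF u_proc V] s] by blast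
      then show "w x * (u B * V x * s) $$ (0,0) = w x" by simp
    qed simp
    finally show ?thesis .
  qed
  show ?thesis using total[of T a, OF T] total[of U b, OF U] rel by simp
qed

lemma xi_preserves_balanced_relation:
  assumes X: "finite X" and a: "\<And>x. x \<in> X \<Longrightarrow> 0 \<le> a x" and b: "\<And>x. x \<in> X \<Longrightarrow> 0 \<le> b x"
    and T: "\<And>x. x \<in> X \<Longrightarrow> T x \<in> proc A B" and U: "\<And>x. x \<in> X \<Longrightarrow> U x \<in> proc A B"
    and sums: "sum a X = sum b X" "0 < sum a X"
    and rel: "msum (sdim B) (sdim A) X (\<lambda>x. a x \<cdot>\<^sub>m T x) = msum (sdim B) (sdim A) X (\<lambda>x. b x \<cdot>\<^sub>m U x)"
  shows "msum (n B) (n A) X (\<lambda>x. a x \<cdot>\<^sub>m xi A B (T x)) = msum (n B) (n A) X (\<lambda>x. b x \<cdot>\<^sub>m xi A B (U x))"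
proof -
  define g where "g = sum a X"
  have g: "0 < g" using sums by (simp add: g_def)
  have weights: "sum (\<lambda>x. (1 / g) * a x) X = 1" "sum (\<lambda>x. (1 / g) * b x) X = 1"
    using g sums unfolding sum_distrib_left[symmetric] by (simp_all add: g_def)
  have nonneg: "\<And>x. x \<in> X \<Longrightarrow> 0 \<le> (1 / g) * a x" "\<And>x. x \<in> X \<Longrightarrow> 0 \<le> (1 / g) * b x"
    using a b g by simp_all
  have Tc: "\<And>x. x \<in> X \<Longrightarrow> T x \<in> carrier_mat (sdim B) (sdim A)"
    and Uc: "\<And>x. x \<in> X \<Longrightarrow> U x \<in> carrier_mat (sdim B) (sdim A)"
    and xTc: "\<And>x. x \<in> X \<Longrightarrow> xi A B (T x) \<in> carrier_mat (n B) (n A)"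
    and xUc: "\<And>x. x \<in> X \<Longrightarrow> xi A B (U x) \<in> carrier_mat (n B) (n A)"
    by (simp_all add: T U proc_carrier xi_carrier)
  have normalized: "msum (sdim B) (sdim A) X (\<lambda>x. ((1 / g) * a x) \<cdot>\<^sub>m T x)
    = msum (sdim B) (sdim A) X (\<lambda>x. ((1 / g) * b x) \<cdot>\<^sub>m U x)"
    by (simp only: msum_scale_weights[OF Tc] msum_scale_weights[OF Uc] rel)
  have "msum (n B) (n A) X (\<lambda>x. ((1 / g) * a x) \<cdot>\<^sub>m xi A B (T x))
    = xi A B (msum (sdim B) (sdim A) X (\<lambda>x. ((1 / g) * a x) \<cdot>\<^sub>m T x))"
    by (rule convex_msum(2)[OF X nonneg(1) weights(1) T, symmetric])
  also have "\<dots> = msum (n B) (n A) X (\<lambda>x. ((1 / g) * b x) \<cdot>\<^sub>m xi A B (U x))"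
    unfolding normalized by (rule convex_msum(2)[OF X nonneg(2) weights(2) U])
  finally have "msum (n B) (n A) X (\<lambda>x. ((1 / g) * a x) \<cdot>\<^sub>m xi A B (T x))
    = msum (n B) (n A) X (\<lambda>x. ((1 / g) * b x) \<cdot>\<^sub>m xi A B (U x))" .
  then have "(1 / g) \<cdot>\<^sub>m msum (n B) (n A) X (\<lambda>x. a x \<cdot>\<^sub>m xi A B (T x)) = (1 / g) \<cdot>\<^sub>m msum (n B) (n A) X (\<lambda>x. b x \<cdot>\<^sub>m xi A B (U x))"
    by (simp only: msum_scale_weights[OF xTc] msum_scale_weights[OF xUc])
  then show ?thesis by (rule smult_mat_cancel[rotated]) (use g in simp)
qed

text \<open>Rescaling \<open>T\<close> by the scalar \<open>q = \<Sum>a / \<Sum>b\<close> balances the weight totals.\<close>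

lemma xi_preserves_relation_le:
  assumes X: "finite X" and a: "\<And>x. x \<in> X \<Longrightarrow> 0 \<le> a x" and b: "\<And>x. x \<in> X \<Longrightarrow> 0 \<le> b x"
    and T: "\<And>x. x \<in> X \<Longrightarrow> T x \<in> proc A B" and U: "\<And>x. x \<in> X \<Longrightarrow> U x \<in> proc A B"
    and pos: "0 < sum a X" and le: "sum a X \<le> sum b X"
    and rel: "msum (sdim B) (sdim A) X (\<lambda>x. a x \<cdot>\<^sub>m T x) = msum (sdim B) (sdim A) X (\<lambda>x. b x \<cdot>\<^sub>m U x)"
  shows "msum (n B) (n A) X (\<lambda>x. a x \<cdot>\<^sub>m xi A B (T x)) = msum (n B) (n A) X (\<lambda>x. b x \<cdot>\<^sub>m xi A B (U x))"
proof (cases "sdim A = 0")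
  case True
  then have "n A = 0" by (rule n_eq_0_if_sdim_eq_0)
  then show ?thesis by (intro eq_matI) simp_all
next
  case False
  define q where "q = sum a X / sum b X"
  have q: "0 < q" "q \<le> 1" using pos le by (simp_all add: q_def)
  have q_proc: "scalar_mat q \<in> proc I I"
  proof (cases "q = 1")
    case True
    show ?thesis using proc_one[of I] unfolding sdim_unit one_mat_1 True .
  next
    case False
    then have "sum a X \<noteq> sum b X" using pos by (auto simp: q_def)
    then have "\<not> proc I I \<subseteq> {1\<^sub>m 1}"
      using weight_sums_eq_if_scalars_trivial[OF _ _ T U rel] \<open>sdim A \<noteq> 0\<close> by auto
    then obtain p where "p \<in> proc I I" "p \<noteq> 1\<^sub>m 1" by blast
    then show ?thesis using scalar_mat_in_proc q by blast
  qed
  have qT: "\<And>x. x \<in> X \<Longrightarrow> q \<cdot>\<^sub>m T x \<in> proc A B"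
    using smult_in_proc[OF q_proc] T by blast
  have rescale: "(a x / q) \<cdot>\<^sub>m (q \<cdot>\<^sub>m M) = a x \<cdot>\<^sub>m M" for x and M :: "real mat"
    using q by (simp add: smult_smult_mat)
  have "msum (n B) (n A) X (\<lambda>x. (a x / q) \<cdot>\<^sub>m xi A B (q \<cdot>\<^sub>m T x)) = msum (n B) (n A) X (\<lambda>x. b x \<cdot>\<^sub>m xi A B (U x))"
  proof (rule xi_preserves_balanced_relation[OF X _ b qT U])
    show "\<And>x. x \<in> X \<Longrightarrow> 0 \<le> a x / q" using a q by simp
    have "sum (\<lambda>x. a x / q) X = sum a X / q" by (rule sum_divide_distrib[symmetric])
    then show "sum (\<lambda>x. a x / q) X = sum b X" "0 < sum (\<lambda>x. a x / q) X"
      using pos le by (simp_all add: q_def)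
    show "msum (sdim B) (sdim A) X (\<lambda>x. (a x / q) \<cdot>\<^sub>m (q \<cdot>\<^sub>m T x)) = msum (sdim B) (sdim A) X (\<lambda>x. b x \<cdot>\<^sub>m U x)"
      using rel by (simp add: rescale)
  qed
  moreover have "(a x / q) \<cdot>\<^sub>m xi A B (q \<cdot>\<^sub>m T x) = a x \<cdot>\<^sub>m xi A B (T x)" if "x \<in> X" for x
    using xi_smult[OF q_proc T[OF that]] by (simp add: rescale)
  ultimately show ?thesis by (simp cong: msum_cong)
qed

lemma xi_preserves_positive_relation:
  assumes "finite X" "\<And>x. x \<in> X \<Longrightarrow> 0 \<le> a x" "\<And>x. x \<in> X \<Longrightarrow> 0 \<le> b x"
    and "\<And>x. x \<in> X \<Longrightarrow> T x \<in> proc A B" "\<And>x. x \<in> X \<Longrightarrow> U x \<in> proc A B"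
    and "0 < sum a X" "0 < sum b X"
    and "msum (sdim B) (sdim A) X (\<lambda>x. a x \<cdot>\<^sub>m T x) = msum (sdim B) (sdim A) X (\<lambda>x. b x \<cdot>\<^sub>m U x)"
  shows "msum (n B) (n A) X (\<lambda>x. a x \<cdot>\<^sub>m xi A B (T x)) = msum (n B) (n A) X (\<lambda>x. b x \<cdot>\<^sub>m xi A B (U x))"
proof (cases "sum a X \<le> sum b X")
  case True
  then show ?thesis using assms xi_preserves_relation_le by blast
next
  case False
  then show ?thesis using assms xi_preserves_relation_le[of X b a U A B T] by fastforce
qed

text \<open>Writing \<open>c = c\<^sup>+ - c\<^sup>-\<close>, the claim follows from the relation
  \<open>2 Q + \<Sum> c\<^sup>- G = Q + \<Sum> c\<^sup>+ G\<close>, whose two weight totals are positive.\<close>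

lemma xi_lincomb:
  assumes X: "finite X" and G: "\<And>x. x \<in> X \<Longrightarrow> G x \<in> proc A B" and Q: "Q \<in> proc A B"
    and Q_eq: "Q = msum (sdim B) (sdim A) X (\<lambda>x. c x \<cdot>\<^sub>m G x)"
  shows "xi A B Q = msum (n B) (n A) X (\<lambda>x. c x \<cdot>\<^sub>m xi A B (G x))"
proof -
  define Y where "Y = insert None (Some ` X)"
  define T where "T y = (case y of None \<Rightarrow> Q | Some x \<Rightarrow> G x)" for y
  define a :: "'a option \<Rightarrow> real" where "a y = (case y of None \<Rightarrow> 2 | Some x \<Rightarrow> max 0 (- c x))" for y
  define b :: "'a option \<Rightarrow> real" where "b y = (case y of None \<Rightarrow> 1 | Some x \<Rightarrow> max 0 (c x))" for y
  have sum_Y: "sum f Y = f None + (\<Sum>x\<in>X. f (Some x))" for f :: "'a option \<Rightarrow> real"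
    using X by (simp add: Y_def sum.reindex)
  have parts: "(\<Sum>x\<in>X. c x * f x) = (\<Sum>x\<in>X. max 0 (c x) * f x) - (\<Sum>x\<in>X. max 0 (- c x) * f x)" for f
    by (subst sum_subtractf[symmetric]) (rule sum.cong, auto simp: max_def algebra_simps)
  have T_proc: "\<And>y. y \<in> Y \<Longrightarrow> T y \<in> proc A B" using G Q by (auto simp: Y_def T_def)
  have entry: "msum r' c' Y (\<lambda>y. w y \<cdot>\<^sub>m M y) $$ (i,j) = w None * M None $$ (i,j) + (\<Sum>x\<in>X. w (Some x) * M (Some x) $$ (i,j))"
    if "\<And>y. y \<in> Y \<Longrightarrow> M y \<in> carrier_mat r' c'" "i < r'" "j < c'" for r' c' i j and w :: "'a option \<Rightarrow> real" and M
    using index_msum_smult[of Y M r' c' i j w] that sum_Y by simp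
  have rel: "msum (sdim B) (sdim A) Y (\<lambda>y. a y \<cdot>\<^sub>m T y) = msum (sdim B) (sdim A) Y (\<lambda>y. b y \<cdot>\<^sub>m T y)"
  proof (rule eq_matI)
    fix i j assume "i < dim_row (msum (sdim B) (sdim A) Y (\<lambda>y. b y \<cdot>\<^sub>m T y))" "j < dim_col (msum (sdim B) (sdim A) Y (\<lambda>y. b y \<cdot>\<^sub>m T y))"
    then have ij: "i < sdim B" "j < sdim A" by simp_all
    have "Q $$ (i,j) = (\<Sum>x\<in>X. c x * G x $$ (i,j))"
      unfolding Q_eq using index_msum_smult[OF proc_carrier[OF G] ij] .
    then show "msum (sdim B) (sdim A) Y (\<lambda>y. a y \<cdot>\<^sub>m T y) $$ (i,j) = msum (sdim B) (sdim A) Y (\<lambda>y. b y \<cdot>\<^sub>m T y) $$ (i,j)"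
      using entry[OF proc_carrier[OF T_proc] ij] parts[of "\<lambda>x. G x $$ (i,j)"] by (simp add: a_def b_def T_def)
  qed simp_all
  have Y: "finite Y" using X by (simp add: Y_def)
  have nonneg: "\<And>y. y \<in> Y \<Longrightarrow> 0 \<le> a y" "\<And>y. y \<in> Y \<Longrightarrow> 0 \<le> b y"
    by (simp_all add: a_def b_def split: option.split)
  have pos: "0 < sum a Y" "0 < sum b Y"
    by (simp_all add: sum_Y a_def b_def add_pos_nonneg sum_nonneg)
  have xi_rel: "msum (n B) (n A) Y (\<lambda>y. a y \<cdot>\<^sub>m xi A B (T y)) = msum (n B) (n A) Y (\<lambda>y. b y \<cdot>\<^sub>m xi A B (T y))"
    by (rule xi_preserves_positive_relation[OF Y nonneg T_proc T_proc pos rel])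
  show ?thesis
  proof (rule eq_matI)
    fix i j assume "i < dim_row (msum (n B) (n A) X (\<lambda>x. c x \<cdot>\<^sub>m xi A B (G x)))" "j < dim_col (msum (n B) (n A) X (\<lambda>x. c x \<cdot>\<^sub>m xi A B (G x)))"
    then have ij: "i < n B" "j < n A" by simp_all
    have "2 * xi A B Q $$ (i,j) + (\<Sum>x\<in>X. max 0 (- c x) * xi A B (G x) $$ (i,j))
      = xi A B Q $$ (i,j) + (\<Sum>x\<in>X. max 0 (c x) * xi A B (G x) $$ (i,j))"
      using arg_cong[OF xi_rel, of "\<lambda>M. M $$ (i,j)"] entry[OF xi_carrier[OF T_proc] ij]
      by (simp add: a_def b_def T_def)
    moreover have xGc: "\<And>x. x \<in> X \<Longrightarrow> xi A B (G x) \<in> carrier_mat (n B) (n A)"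
      using G xi_carrier by blast
    ultimately show "xi A B Q $$ (i,j) = msum (n B) (n A) X (\<lambda>x. c x \<cdot>\<^sub>m xi A B (G x)) $$ (i,j)"
      using index_msum_smult[where F = "\<lambda>x. xi A B (G x)", OF xGc ij] parts[of "\<lambda>x. xi A B (G x) $$ (i,j)"] by simp
  qed (use xi_carrier[OF Q] in simp_all)
qed

end

section \<open>The similarity \<open>chi\<close>\<close>

locale resolved_gpt_ontological_model = gpt_ontological_model sdim tens I proc u n xi
  for sdim :: "'sys \<Rightarrow> nat" and tens :: "'sys \<Rightarrow> 'sys \<Rightarrow> 'sys" and I :: 'sys
    and proc :: "'sys \<Rightarrow> 'sys \<Rightarrow> real mat set" and u :: "'sys \<Rightarrow> real mat"
    and n :: "'sys \<Rightarrow> nat" and xi :: "'sys \<Rightarrow> 'sys \<Rightarrow> real mat \<Rightarrow> real mat" +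
  fixes X :: "'sys \<Rightarrow> 'i set" and s r :: "'sys \<Rightarrow> 'i \<Rightarrow> real mat"
    and Y :: "'sys \<Rightarrow> 'j set" and e c :: "'sys \<Rightarrow> 'j \<Rightarrow> real mat"
  assumes states_resolve: "state_resolution A (X A) (s A) (r A)"
    and effects_resolve: "effect_resolution A (Y A) (e A) (c A)"
begin

lemma finite_states: "finite (X A)"
  and state_in_proc: "x \<in> X A \<Longrightarrow> s A x \<in> proc I A"
  and resolution_row_carrier: "x \<in> X A \<Longrightarrow> r A x \<in> carrier_mat 1 (sdim A)"
  and states_sum_identity: "msum (sdim A) (sdim A) (X A) (\<lambda>x. s A x * r A x) = 1\<^sub>m (sdim A)"
  using states_resolve[of A] by (simp_all add: state_resolution_def)

lemma finite_effects: "finite (Y A)"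
  and effect_in_proc: "y \<in> Y A \<Longrightarrow> e A y \<in> proc A I"
  and resolution_col_carrier: "y \<in> Y A \<Longrightarrow> c A y \<in> carrier_mat (sdim A) 1"
  and effects_sum_identity: "msum (sdim A) (sdim A) (Y A) (\<lambda>y. c A y * e A y) = 1\<^sub>m (sdim A)"
  using effects_resolve[of A] by (simp_all add: effect_resolution_def)

lemmas resolution_carriers = resolution_row_carrier resolution_col_carrier
  state_carrier[OF state_in_proc] effect_carrier[OF effect_in_proc]
  xi_state_carrier[OF state_in_proc] xi_effect_carrier[OF effect_in_proc]

text \<open>\<open>chi A\<close> is the linear extension of \<open>xi I A\<close> from the states to all of \<open>A\<close>,
  \<open>chi_inv A\<close> that of \<open>xi A I\<close> from the effects to all of \<open>A\<^sup>*\<close>.\<close>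

definition chi :: "'sys \<Rightarrow> real mat" where
  "chi A = msum (n A) (sdim A) (X A) (\<lambda>x. xi I A (s A x) * r A x)"

definition chi_inv :: "'sys \<Rightarrow> real mat" where
  "chi_inv A = msum (sdim A) (n A) (Y A) (\<lambda>y. c A y * xi A I (e A y))"

lemma chi_carrier [simp]: "chi A \<in> carrier_mat (n A) (sdim A)"
  by (simp add: chi_def)

lemma chi_inv_carrier [simp]: "chi_inv A \<in> carrier_mat (sdim A) (n A)"
  by (simp add: chi_inv_def)

lemma chi_inv_xi_chi:
  assumes T: "T \<in> proc A B"
  shows "chi_inv B * xi A B T * chi A = T"
proof -
  have "chi_inv B * xi A B T * chi A
      = msum (sdim B) (sdim A) (Y B \<times> X A) (\<lambda>(y,x). c B y * (xi B I (e B y) * xi A B T * xi I A (s A x)) * r A x)"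
    unfolding chi_def chi_inv_def
    by (rule msum_sandwich) (rule resolution_carriers xi_carrier[OF T] | assumption)+
  also have "\<dots> = msum (sdim B) (sdim A) (Y B \<times> X A) (\<lambda>(y,x). c B y * (e B y * T * s A x) * r A x)"
    by (rule msum_cong) (auto simp: xi_scalar_sandwich[OF effect_in_proc T state_in_proc])
  also have "\<dots> = msum (sdim B) (sdim B) (Y B) (\<lambda>y. c B y * e B y) * T * msum (sdim A) (sdim A) (X A) (\<lambda>x. s A x * r A x)"
    by (rule msum_sandwich[symmetric]) (rule resolution_carriers proc_carrier[OF T] | assumption)+
  also have "\<dots> = T"
    using proc_carrier[OF T] by (simp add: states_sum_identity effects_sum_identity)
  finally show ?thesis .
qed

lemma chi_inv_chi: "chi_inv A * chi A = 1\<^sub>m (sdim A)"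
  using chi_inv_xi_chi[OF proc_one, of A] right_mult_one_mat[OF chi_inv_carrier] by (simp add: xi_one)

lemma chi_chi_inv: "chi A * chi_inv A = 1\<^sub>m (n A)"
proof -
  define w where "w = (\<lambda>(x,y). (r A x * c A y) $$ (0,0))"
  define G where "G = (\<lambda>(x,y). s A x * e A y)"
  have G_proc: "\<And>z. z \<in> X A \<times> Y A \<Longrightarrow> G z \<in> proc A A"
    by (auto simp: G_def intro: proc_mult state_in_proc effect_in_proc)
  have "1\<^sub>m (sdim A) = msum (sdim A) (sdim A) (X A) (\<lambda>x. s A x * r A x) * msum (sdim A) (sdim A) (Y A) (\<lambda>y. c A y * e A y)"
    by (simp add: states_sum_identity effects_sum_identity)
  also have "\<dots> = msum (sdim A) (sdim A) (X A \<times> Y A) (\<lambda>(x,y). (r A x * c A y) $$ (0,0) \<cdot>\<^sub>m (s A x * e A y))"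
    by (rule msum_outer_products) (rule resolution_carriers | assumption)+
  finally have identity: "1\<^sub>m (sdim A) = msum (sdim A) (sdim A) (X A \<times> Y A) (\<lambda>z. w z \<cdot>\<^sub>m G z)"
    by (simp add: w_def G_def split_def)
  have "chi A * chi_inv A
      = msum (n A) (n A) (X A \<times> Y A) (\<lambda>(x,y). (r A x * c A y) $$ (0,0) \<cdot>\<^sub>m (xi I A (s A x) * xi A I (e A y)))"
    unfolding chi_def chi_inv_def by (rule msum_outer_products) (rule resolution_carriers | assumption)+
  also have "\<dots> = msum (n A) (n A) (X A \<times> Y A) (\<lambda>z. w z \<cdot>\<^sub>m xi A A (G z))"
    by (rule msum_cong) (auto simp: w_def G_def xi_mult[OF state_in_proc effect_in_proc])
  also have "\<dots> = xi A A (1\<^sub>m (sdim A))"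
    using finite_states finite_effects by (intro xi_lincomb[symmetric] G_proc proc_one identity) auto
  also have "\<dots> = 1\<^sub>m (n A)" by (rule xi_one)
  finally show ?thesis .
qed

lemma ones_row_chi: "ones_row (n A) * chi A = u A"
proof -
  have ones: "ones_row (n A) \<in> carrier_mat 1 (n A)" by (simp add: ones_row_def)
  have u: "u A \<in> carrier_mat 1 (sdim A)" by (rule effect_carrier[OF u_proc])
  have ones_xi: "ones_row (n A) * xi I A p = u A * p" if "p \<in> proc I A" for p
    using xi_mult[OF u_proc that] xi_scalar[OF proc_mult[OF u_proc that]] by (simp add: xi_u)
  have xsr: "\<And>x. x \<in> X A \<Longrightarrow> xi I A (s A x) * r A x \<in> carrier_mat (n A) (sdim A)"
    and sr: "\<And>x. x \<in> X A \<Longrightarrow> s A x * r A x \<in> carrier_mat (sdim A) (sdim A)"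
    using resolution_carriers by (meson mult_carrier_mat)+
  have "ones_row (n A) * chi A = msum 1 (sdim A) (X A) (\<lambda>x. ones_row (n A) * (xi I A (s A x) * r A x))"
    unfolding chi_def by (rule mult_msum[OF ones xsr])
  also have "\<dots> = msum 1 (sdim A) (X A) (\<lambda>x. u A * (s A x * r A x))"
  proof (rule msum_cong[OF refl])
    fix x assume x: "x \<in> X A"
    have "ones_row (n A) * (xi I A (s A x) * r A x) = ones_row (n A) * xi I A (s A x) * r A x"
      by (rule assoc_mult_mat[OF ones xi_state_carrier[OF state_in_proc[OF x]] resolution_row_carrier[OF x], symmetric])
    also have "\<dots> = u A * s A x * r A x" by (simp add: ones_xi[OF state_in_proc[OF x]])
    also have "\<dots> = u A * (s A x * r A x)"
      by (rule assoc_mult_mat[OF u state_carrier[OF state_in_proc[OF x]] resolution_row_carrier[OF x]])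
    finally show "ones_row (n A) * (xi I A (s A x) * r A x) = u A * (s A x * r A x)" .
  qed
  also have "\<dots> = u A * msum (sdim A) (sdim A) (X A) (\<lambda>x. s A x * r A x)"
    by (rule mult_msum[OF u sr, symmetric])
  also have "\<dots> = u A"
    using u by (simp add: states_sum_identity)
  finally show ?thesis .
qed

lemma xi_eq_chi_conj:
  assumes T: "T \<in> proc A B"
  shows "xi A B T = chi B * T * chi_inv A"
proof -
  have "chi B * T * chi_inv A = chi B * (chi_inv B * xi A B T * chi A) * chi_inv A"
    by (simp only: chi_inv_xi_chi[OF T])
  also have "\<dots> = xi A B T"
    by (rule conjugate_inverse_cancel[OF chi_carrier chi_inv_carrier chi_carrier chi_inv_carrier xi_carrier[OF T] chi_chi_inv chi_chi_inv])
  finally show ?thesis by simp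
qed

lemma chi_conj_cone:
  assumes "Z \<in> cone_of (sdim B) (sdim A) (proc A B)"
  shows "chi B * Z * chi_inv A \<in> cone_of (n B) (n A) {F. substoch (n A) (n B) F}"
proof -
  obtain K a M where K: "finite K" and aM: "\<forall>k\<in>K. 0 \<le> a k \<and> M k \<in> proc A B"
    and Z: "Z = lin_comb (sdim B) (sdim A) K a M"
    using assms unfolding cone_of_def by blast
  have M: "\<And>k. k \<in> K \<Longrightarrow> M k \<in> carrier_mat (sdim B) (sdim A)"
    and xM: "\<And>k. k \<in> K \<Longrightarrow> xi A B (M k) \<in> carrier_mat (n B) (n A)"
    using aM proc_carrier xi_carrier by blast+
  have "Z = msum (sdim B) (sdim A) K (\<lambda>k. a k \<cdot>\<^sub>m M k)"
    unfolding Z by (rule lin_comb_eq_msum) (rule M)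
  then have "chi B * Z * chi_inv A = msum (n B) (n A) K (\<lambda>k. a k \<cdot>\<^sub>m (chi B * M k * chi_inv A))"
    by (simp only: mult_msum_smult_mult[OF chi_carrier chi_inv_carrier M])
  also have "\<dots> = msum (n B) (n A) K (\<lambda>k. a k \<cdot>\<^sub>m xi A B (M k))"
    using aM by (auto simp: xi_eq_chi_conj intro!: msum_cong)
  also have "\<dots> = lin_comb (n B) (n A) K a (\<lambda>k. xi A B (M k))"
    by (rule lin_comb_eq_msum[where M = "\<lambda>k. xi A B (M k)", OF xM, symmetric])
  finally show ?thesis
    using K aM xi_substoch unfolding cone_of_def by blast
qed

end

theorem proposition3:
  fixes sdim :: "'sys \<Rightarrow> nat" and tens :: "'sys \<Rightarrow> 'sys \<Rightarrow> 'sys" and I :: 'sys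
    and proc :: "'sys \<Rightarrow> 'sys \<Rightarrow> real mat set" and u :: "'sys \<Rightarrow> real mat"
    and n :: "'sys \<Rightarrow> nat" and xi :: "'sys \<Rightarrow> 'sys \<Rightarrow> real mat \<Rightarrow> real mat"
  assumes "tl_gpt sdim tens I proc u"
    and "ontological_model sdim tens I proc u n xi"
  shows "\<exists>chi chi_inv. \<forall>A.
     chi A \<in> carrier_mat (n A) (sdim A) \<and> chi_inv A \<in> carrier_mat (sdim A) (n A) \<and>
     chi_inv A * chi A = 1\<^sub>m (sdim A) \<and> chi A * chi_inv A = 1\<^sub>m (n A) \<and>
     (\<forall>B T. T \<in> proc A B \<longrightarrow> xi A B T = chi B * T * chi_inv A) \<and>
     ones_row (n A) * chi A = u A \<and>
     (\<forall>B. \<forall>X \<in> cone_of (sdim B) (sdim A) (proc A B).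
        chi B * X * chi_inv A \<in> cone_of (n B) (n A) {F. substoch (n A) (n B) F})"
proof -
  interpret gpt_ontological_model sdim tens I proc u n xi
    using assms by (rule gpt_ontological_model.intro)
  obtain X :: "'sys \<Rightarrow> (nat \<times> nat) set" and s r where "\<And>A. state_resolution A (X A) (s A) (r A)"
    using state_resolution_exists by metis
  moreover obtain Y :: "'sys \<Rightarrow> (nat \<times> nat) set" and e c where "\<And>A. effect_resolution A (Y A) (e A) (c A)"
    using effect_resolution_exists by metis
  ultimately interpret resolved_gpt_ontological_model sdim tens I proc u n xi X s r Y e c
    by unfold_locales
  show ?thesis
    by (intro exI[of _ chi] exI[of _ chi_inv] allI conjI ballI impI)
      (simp_all add: chi_inv_chi chi_chi_inv xi_eq_chi_conj ones_row_chi chi_conj_cone)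
qed

end
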